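(* Let $X$ be a compact metrizable space, let $F_1^\bullet,\dots,F_N^\bullet$ be open subsets of $X$, and let $F_i^\circ\subset F_i^\bullet$ be open subsets with $\overline{F_i^\circ}\subset F_i^\bullet$ and $X=\bigcup_{i=1}^NF_i^\circ$. Let $\mathcal{I}$ be the set of nonempty subsets of $\{1,\dots,N\}$, partially ordered by inclusion, and order its elements as $I_1,\dots,I_M$ so that $I_k\subseteq I_l$ implies $k\le l$. For each $i$ choose open sets $$F_i^\circ=:G_i^1\sqsubset F_i^1\sqsubset G_i^2\sqsubset F_i^2\sqsubset\cdots\sqsubset G_i^M\sqsubset F_i^M:=F_i^\bullet,$$ where $A\sqsubset B$ means $\overline{A}\subset B$. For $I_k\in\mathcal{I}$ define $$F_{I_k}^\square:=\Big(\bigcap_{i\in I_k}F_i^k\Big)\setminus\Big(\bigcup_{i\notin I_k}\overline{G_i^k}\Big).$$ Then for all $I,J\in\mathcal{I}$, $\overline{F_I^\square}\cap\overline{F_J^\square}\ne\emptyset$ implies $I\subseteq J$ or $J\subseteq I$.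
   Context: All closures are taken in $X$. *)

theory Defs
  imports "HOL-Analysis.Analysis"
begin

definition Fsquare ::
  "'a topology \<Rightarrow> nat \<Rightarrow> (nat \<Rightarrow> nat set) \<Rightarrow> (nat \<Rightarrow> nat \<Rightarrow> 'a set)
     \<Rightarrow> (nat \<Rightarrow> nat \<Rightarrow> 'a set) \<Rightarrow> nat \<Rightarrow> 'a set" where
  "Fsquare X N Ik F G k =
     (\<Inter>i\<in>Ik k. F i k) - (\<Union>i\<in>{1..N} - Ik k. X closure_of (G i k))"

end

theory Submission
  imports Defs
begin

text \<open>Let k < l and i \<in> I_k - I_l. The closure of the k-th square set lies in the closure
  of F_i^k, hence in G_i^{k+1} \<subseteq> G_i^l. This open set misses the l-th square set by
  construction, and therefore also misses its closure.\<close>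

lemma nested_closures_mono:
  assumes GF: "\<And>j. j \<in> J \<Longrightarrow> X closure_of (G j) \<subseteq> F j"
    and FG: "\<And>j. j \<in> J \<Longrightarrow> X closure_of (F j) \<subseteq> G (Suc j)"
    and in_space: "\<And>j. j \<in> J \<Longrightarrow> G j \<subseteq> topspace X \<and> F j \<subseteq> topspace X"
    and "k \<le> l" "{k..<l} \<subseteq> J"
  shows "G k \<subseteq> G l"
proof (rule lift_Suc_mono_le_ivl[where N = J])
  fix j assume j: "j \<in> J"
  have "G j \<subseteq> X closure_of (G j)" using in_space[OF j] by (simp add: closure_of_subset)
  also have "\<dots> \<subseteq> F j" using GF[OF j] .
  also have "\<dots> \<subseteq> X closure_of (F j)" using in_space[OF j] by (simp add: closure_of_subset)
  also have "\<dots> \<subseteq> G (Suc j)" using FG[OF j] .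
  finally show "G j \<subseteq> G (Suc j)" .
qed (use assms in auto)

lemma closure_of_Fsquare_subset:
  assumes "i \<in> Ik k"
  shows "X closure_of (Fsquare X N Ik F G k) \<subseteq> X closure_of (F i k)"
  using assms by (intro closure_of_mono) (auto simp: Fsquare_def)

lemma openin_Int_closure_of_Fsquare_eq_empty:
  assumes "openin X (G i k)" and "i \<in> {1..N}" and "i \<notin> Ik k"
  shows "G i k \<inter> X closure_of (Fsquare X N Ik F G k) = {}"
proof -
  have "G i k \<subseteq> X closure_of (G i k)"
    using assms(1) by (simp add: closure_of_subset openin_subset)
  moreover have "X closure_of (G i k) \<inter> Fsquare X N Ik F G k = {}"
    using assms(2,3) by (auto simp: Fsquare_def)
  ultimately show ?thesis
    using openin_Int_closure_of_eq_empty[OF assms(1)] by blast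
qed

lemma closure_of_Fsquare_disjoint:
  assumes "i \<in> {1..N}" and "i \<in> Ik k" and "i \<notin> Ik l"
    and "openin X (G i l)" and "X closure_of (F i k) \<subseteq> G i l"
  shows "X closure_of (Fsquare X N Ik F G k) \<inter> X closure_of (Fsquare X N Ik F G l) = {}"
  using closure_of_Fsquare_subset[of i Ik k X N F G] assms(2,5)
    openin_Int_closure_of_Fsquare_eq_empty[of X G i l N Ik F] assms(1,3,4)
  by blast

theorem lemma11p5:
  fixes X :: "'a topology" and N M :: nat
    and Ik :: "nat \<Rightarrow> nat set"
    and F G :: "nat \<Rightarrow> nat \<Rightarrow> 'a set"
  assumes cpt: "compact_space X" and metr: "metrizable_space X"
    and enum: "bij_betw Ik {1..M} {I. I \<subseteq> {1..N} \<and> I \<noteq> {}}"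
    and enum_mono: "\<And>k l. k \<in> {1..M} \<Longrightarrow> l \<in> {1..M} \<Longrightarrow> Ik k \<subseteq> Ik l \<Longrightarrow> k \<le> l"
    and openF: "\<And>i k. i \<in> {1..N} \<Longrightarrow> k \<in> {1..M} \<Longrightarrow> openin X (F i k)"
    and openG: "\<And>i k. i \<in> {1..N} \<Longrightarrow> k \<in> {1..M} \<Longrightarrow> openin X (G i k)"
    and GF: "\<And>i k. i \<in> {1..N} \<Longrightarrow> k \<in> {1..M} \<Longrightarrow> X closure_of (G i k) \<subseteq> F i k"
    and FG: "\<And>i k. i \<in> {1..N} \<Longrightarrow> k \<in> {1..M} \<Longrightarrow> k < M \<Longrightarrow>
               X closure_of (F i k) \<subseteq> G i (Suc k)"
    and circ_bullet: "\<And>i. i \<in> {1..N} \<Longrightarrow> X closure_of (G i 1) \<subseteq> F i M"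
    and cover: "topspace X = (\<Union>i\<in>{1..N}. G i 1)"
  shows "\<forall>k\<in>{1..M}. \<forall>l\<in>{1..M}.
           X closure_of (Fsquare X N Ik F G k) \<inter> X closure_of (Fsquare X N Ik F G l) \<noteq> {}
           \<longrightarrow> Ik k \<subseteq> Ik l \<or> Ik l \<subseteq> Ik k"
proof -
  have disjoint: "X closure_of (Fsquare X N Ik F G k) \<inter> X closure_of (Fsquare X N Ik F G l) = {}"
    if k: "k \<in> {1..M}" and l: "l \<in> {1..M}" and "k < l" and "\<not> Ik k \<subseteq> Ik l" for k l
  proof -
    obtain i where ik: "i \<in> Ik k" and il: "i \<notin> Ik l" using \<open>\<not> Ik k \<subseteq> Ik l\<close> by blast
    have i: "i \<in> {1..N}" using bij_betwE[OF enum] k ik by blast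
    have "G i (Suc k) \<subseteq> G i l"
    proof (rule nested_closures_mono[where X = X and J = "{1..<M}"])
      fix j assume "j \<in> {1..<M}"
      then have j: "j \<in> {1..M}" "j < M" by auto
      show "X closure_of (G i j) \<subseteq> F i j" using GF[OF i j(1)] .
      show "X closure_of (F i j) \<subseteq> G i (Suc j)" using FG[OF i j] .
      show "G i j \<subseteq> topspace X \<and> F i j \<subseteq> topspace X"
        using openin_subset openF[OF i j(1)] openG[OF i j(1)] by blast
    qed (use \<open>k < l\<close> l in auto)
    then have "X closure_of (F i k) \<subseteq> G i l" using FG[OF i k] \<open>k < l\<close> l by auto
    with i ik il openG[OF i l] show ?thesis by (rule closure_of_Fsquare_disjoint)
  qed
  show ?thesis
  proof (intro ballI impI)
    fix k l assume k: "k \<in> {1..M}" and l: "l \<in> {1..M}"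
      and meet: "X closure_of (Fsquare X N Ik F G k) \<inter> X closure_of (Fsquare X N Ik F G l) \<noteq> {}"
    show "Ik k \<subseteq> Ik l \<or> Ik l \<subseteq> Ik k"
    proof (cases k l rule: linorder_cases)
      case less then show ?thesis using disjoint[OF k l] meet by blast
    next
      case equal then show ?thesis by simp
    next
      case greater then show ?thesis using disjoint[OF l k] meet by blast
    qed
  qed
qed

end
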